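(* Let $q\ge 7$ and $s\in[1,7]$ be integers, $C$ a finite set with $|C|=2q+s$, and $M\in\mathcal M(6,q,C)$. Let $\{i,k\}\subseteq\{1,\dots,6\}$, $i\ne k$, with $r(i,k)\ge 1$, and let $B\subseteq\{1,\dots,6\}$ with $3\le|B|\le 4$ and $B\cap\{i,k\}=\emptyset$. Then $r(B)\le r^*(B)\le 2|B|$.
   Context: $\mathcal M(6,q,C)$ is the set of $6\times q$ matrices $M$ with entries from $C$ such that each row has $q$ pairwise distinct entries, each column has $6$ pairwise distinct entries, and every pair of distinct colours of $C$ appears together in some row or some column of $M$. The frequency of a colour is the number of entries of $M$ equal to it. For $A\subseteq\{1,\dots,6\}$ with $|A|\ge 2$, $\operatorname{ro}(A)$ denotes the set of colours of frequency exactly $|A|$ that appear in every row indexed by an element of $A$, and $r(A)=|\operatorname{ro}(A)|$; $r(i,k)=r(\{i,k\})$. For $B\subseteq\{1,\dots,6\}$ with $3\le|B|\le4$, $\operatorname{ro}^*(B)=\bigcup\{\operatorname{ro}(A): A\subseteq B,\ 2\le|A|\le|B|\}$ and $r^*(B)=|\operatorname{ro}^*(B)|$. *)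

theory Defs
  imports Main
begin

definition in_M6 :: "nat \<Rightarrow> 'c set \<Rightarrow> (nat \<Rightarrow> nat \<Rightarrow> 'c) \<Rightarrow> bool" where
  "in_M6 q C M \<longleftrightarrow>
     (\<forall>i\<in>{1..6}. \<forall>j\<in>{1..q}. M i j \<in> C) \<and>
     (\<forall>i\<in>{1..6}. inj_on (M i) {1..q}) \<and>
     (\<forall>j\<in>{1..q}. inj_on (\<lambda>i. M i j) {1..6}) \<and>
     (\<forall>a\<in>C. \<forall>b\<in>C. a \<noteq> b \<longrightarrow>
        (\<exists>i\<in>{1..6}. a \<in> M i ` {1..q} \<and> b \<in> M i ` {1..q}) \<or>
        (\<exists>j\<in>{1..q}. a \<in> (\<lambda>i. M i j) ` {1..6} \<and> b \<in> (\<lambda>i. M i j) ` {1..6}))"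

definition freq :: "nat \<Rightarrow> (nat \<Rightarrow> nat \<Rightarrow> 'c) \<Rightarrow> 'c \<Rightarrow> nat" where
  "freq q M c = card {(i, j). i \<in> {1..6} \<and> j \<in> {1..q} \<and> M i j = c}"

definition ro :: "nat \<Rightarrow> 'c set \<Rightarrow> (nat \<Rightarrow> nat \<Rightarrow> 'c) \<Rightarrow> nat set \<Rightarrow> 'c set" where
  "ro q C M A = {c \<in> C. freq q M c = card A \<and> (\<forall>i\<in>A. c \<in> M i ` {1..q})}"

definition r :: "nat \<Rightarrow> 'c set \<Rightarrow> (nat \<Rightarrow> nat \<Rightarrow> 'c) \<Rightarrow> nat set \<Rightarrow> nat" where
  "r q C M A = card (ro q C M A)"

definition ro_star :: "nat \<Rightarrow> 'c set \<Rightarrow> (nat \<Rightarrow> nat \<Rightarrow> 'c) \<Rightarrow> nat set \<Rightarrow> 'c set" where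
  "ro_star q C M B = \<Union>{ro q C M A | A. A \<subseteq> B \<and> 2 \<le> card A \<and> card A \<le> card B}"

definition r_star :: "nat \<Rightarrow> 'c set \<Rightarrow> (nat \<Rightarrow> nat \<Rightarrow> 'c) \<Rightarrow> nat set \<Rightarrow> nat" where
  "r_star q C M B = card (ro_star q C M B)"

end

theory Submission
  imports Defs
begin

text \<open>Pick a colour \<open>c \<in> ro({i,k})\<close>. A colour of \<open>ro(A)\<close> occurs exactly once in each row of \<open>A\<close>
and nowhere else, since its frequency is \<open>|A|\<close>. So a colour \<open>d \<in> ro\<^sup>*(B)\<close> shares no row with
\<open>c\<close> (as \<open>B \<inter> {i,k} = {}\<close>) and must therefore share one of the two columns of \<open>c\<close>, in a row
of \<open>B\<close>: \<open>ro\<^sup>*(B)\<close> is covered by \<open>2|B|\<close> cells.\<close>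

lemma ro_row_mem:
  assumes "d \<in> ro q C M A" "A \<subseteq> {1..6}"
    and "m \<in> {1..6}" "j \<in> {1..q}" "M m j = d"
  shows "m \<in> A"
proof -
  let ?S = "{(i, j). i \<in> {1..6} \<and> j \<in> {1..q} \<and> M i j = d}"
  have "finite ?S" by (rule finite_subset[of _ "{1..6} \<times> {1..q}"]) auto
  from assms(1) have card_S: "card ?S = card A" and occ: "\<forall>i\<in>A. d \<in> M i ` {1..q}"
    unfolding ro_def freq_def by simp_all
  obtain g where g: "\<forall>i\<in>A. g i \<in> {1..q} \<and> M i (g i) = d"
    using bchoice[of A "\<lambda>i j. j \<in> {1..q} \<and> M i j = d"] occ by fastforce
  let ?T = "(\<lambda>i. (i, g i)) ` A"
  have "?T \<subseteq> ?S" using g assms(2) by auto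
  moreover have "card ?T = card A" by (rule card_image) (simp add: inj_on_def)
  ultimately have "?T = ?S" using card_subset_eq[OF \<open>finite ?S\<close>] card_S by simp
  then show ?thesis using assms(3-5) by blast
qed

lemma r_le_r_star:
  assumes "finite C" "2 \<le> card B"
  shows "r q C M B \<le> r_star q C M B"
proof -
  have "ro q C M B \<subseteq> ro_star q C M B"
    using assms(2) unfolding ro_star_def by blast
  moreover have "finite (ro_star q C M B)"
    by (rule finite_subset[OF _ assms(1)]) (auto simp: ro_star_def ro_def)
  ultimately show ?thesis unfolding r_def r_star_def by (rule card_mono[rotated])
qed

lemma ro_disjoint_share_column:
  assumes "in_M6 q C M" "P \<subseteq> {1..6}" "A \<subseteq> {1..6}" "A \<inter> P = {}" "A \<noteq> {}"
    and c: "c \<in> ro q C M P" and d: "d \<in> ro q C M A"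
  shows "\<exists>m\<in>A. \<exists>p\<in>P. \<exists>j\<in>{1..q}. M m j = d \<and> M p j = c"
proof -
  have "c \<in> C" "d \<in> C" using c d by (simp_all add: ro_def)
  obtain a where "a \<in> A" using assms(5) by blast
  then obtain ja where "ja \<in> {1..q}" "M a ja = d" using d by (auto simp: ro_def)
  have "d \<noteq> c"
  proof
    assume "d = c"
    then have "a \<in> P"
      using ro_row_mem[OF c assms(2)] \<open>a \<in> A\<close> assms(3) \<open>ja \<in> {1..q}\<close> \<open>M a ja = d\<close> by auto
    then show False using \<open>a \<in> A\<close> assms(4) by blast
  qed
  have "(\<exists>m\<in>{1..6}. d \<in> M m ` {1..q} \<and> c \<in> M m ` {1..q}) \<or>
        (\<exists>j\<in>{1..q}. d \<in> (\<lambda>i. M i j) ` {1..6} \<and> c \<in> (\<lambda>i. M i j) ` {1..6})"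
    using assms(1) \<open>c \<in> C\<close> \<open>d \<in> C\<close> \<open>d \<noteq> c\<close> unfolding in_M6_def by blast
  moreover have "\<not> (d \<in> M m ` {1..q} \<and> c \<in> M m ` {1..q})" if "m \<in> {1..6}" for m
    using that ro_row_mem[OF d assms(3)] ro_row_mem[OF c assms(2)] assms(4) by blast
  ultimately obtain j where "j \<in> {1..q}" "d \<in> (\<lambda>i. M i j) ` {1..6}" "c \<in> (\<lambda>i. M i j) ` {1..6}"
    by blast
  then show ?thesis
    using ro_row_mem[OF d assms(3)] ro_row_mem[OF c assms(2)] by blast
qed

lemma r_star_le_card_mult:
  assumes M: "in_M6 q C M" and "P \<subseteq> {1..6}" "B \<subseteq> {1..6}" "B \<inter> P = {}"
    and "ro q C M P \<noteq> {}"
  shows "r_star q C M B \<le> card B * card P"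
proof -
  obtain c where c: "c \<in> ro q C M P" using assms(5) by blast
  obtain col where col: "\<forall>p\<in>P. col p \<in> {1..q} \<and> M p (col p) = c"
    using bchoice[of P "\<lambda>p j. j \<in> {1..q} \<and> M p j = c"] c by (fastforce simp: ro_def)
  have "finite B" "finite P" using assms(2,3) finite_subset by blast+
  have cover: "ro_star q C M B \<subseteq> (\<lambda>(m, j). M m j) ` (B \<times> col ` P)"
  proof
    fix d assume "d \<in> ro_star q C M B"
    then obtain A where A: "A \<subseteq> B" "2 \<le> card A" "d \<in> ro q C M A"
      unfolding ro_star_def by blast
    then have "A \<noteq> {}" by auto
    then obtain m p j where "m \<in> A" "p \<in> P" "j \<in> {1..q}" "M m j = d" "M p j = c"
      using ro_disjoint_share_column[OF M assms(2) _ _ _ c A(3)] A(1) assms(3,4) by blast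
    moreover have "j = col p"
    proof (rule inj_onD)
      show "inj_on (M p) {1..q}"
        using M \<open>p \<in> P\<close> assms(2) unfolding in_M6_def by blast
      show "M p j = M p (col p)" "j \<in> {1..q}" "col p \<in> {1..q}"
        using col \<open>p \<in> P\<close> \<open>j \<in> {1..q}\<close> \<open>M p j = c\<close> by auto
    qed
    ultimately have "(m, j) \<in> B \<times> col ` P" using A(1) by blast
    then show "d \<in> (\<lambda>(m, j). M m j) ` (B \<times> col ` P)"
      by (rule rev_image_eqI) (simp add: \<open>M m j = d\<close>)
  qed
  have "r_star q C M B \<le> card ((\<lambda>(m, j). M m j) ` (B \<times> col ` P))"
    unfolding r_star_def using cover \<open>finite B\<close> \<open>finite P\<close> by (simp add: card_mono)
  also have "\<dots> \<le> card (B \<times> col ` P)"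
    using \<open>finite B\<close> \<open>finite P\<close> by (intro card_image_le) simp
  also have "\<dots> \<le> card B * card P"
    by (simp add: card_cartesian_product \<open>finite P\<close> card_image_le)
  finally show ?thesis .
qed

theorem claim3:
  fixes q s :: nat and C :: "'c set" and M :: "nat \<Rightarrow> nat \<Rightarrow> 'c"
    and i k :: nat and B :: "nat set"
  assumes "q \<ge> 7" and "1 \<le> s" and "s \<le> 7"
    and "finite C" and "card C = 2 * q + s"
    and "in_M6 q C M"
    and "i \<in> {1..6}" and "k \<in> {1..6}" and "i \<noteq> k"
    and "r q C M {i, k} \<ge> 1"
    and "B \<subseteq> {1..6}" and "3 \<le> card B" and "card B \<le> 4"
    and "B \<inter> {i, k} = {}"
  shows "r q C M B \<le> r_star q C M B \<and> r_star q C M B \<le> 2 * card B"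
proof
  show "r q C M B \<le> r_star q C M B"
    using r_le_r_star[OF assms(4)] assms(12) by simp
  have "ro q C M {i, k} \<noteq> {}"
    using assms(10) unfolding r_def by auto
  then have "r_star q C M B \<le> card B * card {i, k}"
    using r_star_le_card_mult[OF assms(6) _ assms(11,14)] assms(7,8) by simp
  then show "r_star q C M B \<le> 2 * card B"
    using assms(9) by simp
qed

end
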